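(* With $\varepsilon,N,q,P_{(0)},d$ as in the context, assume $4d^2<1$ and put $w_\pm=\frac{-1\pm\sqrt{1-4d^2}}{2d^2}$. Then $\hat R(w_\pm)=I+w_\pm P_{(0)}$ satisfy the braid equation $$\hat R_{12}(w_\pm)\hat R_{23}(w_\pm)\hat R_{12}(w_\pm)=\hat R_{23}(w_\pm)\hat R_{12}(w_\pm)\hat R_{23}(w_\pm),$$ and $\hat R(w_+)\hat R(w_-)=I$. Moreover, for every $w\in\mathbb C$, $\hat R(w)=\frac{(w-w_-)\hat R(w_+)-(w-w_+)\hat R(w_-)}{w_+-w_-}$.
   Context: Let $\varepsilon\in\{1,-1\}$, $N\ge 2$ (with $N=2n$ even if $\varepsilon=-1$), $q>0$, $[x]=(q^x-q^{-x})/(q-q^{-1})$ ($[x]=x$ if $q=1$). Define $\rho=(n-\tfrac12,\dots,\tfrac12,0,-\tfrac12,\dots,-n+\tfrac12)$ if $\varepsilon=1,N=2n+1$; $\rho=(n-1,\dots,1,0,0,-1,\dots,-n+1)$ if $\varepsilon=1,N=2n$; $\rho=(n,\dots,1,-1,\dots,-n)$ if $\varepsilon=-1,N=2n$. Let $\epsilon_i=1$ for all $i$ if $\varepsilon=1$; $\epsilon_i=1$ for $i\le n$ and $-1$ for $i>n$ if $\varepsilon=-1$. With $i'=N+1-i$ and matrix units $E_{ij}$, $P_{(0)}=(1+\varepsilon[N-\varepsilon])^{-1}\sum_{i,j}q^{\rho_i-\rho_j}\epsilon_i\epsilon_jE_{i',j}\otimes E_{i,j'}$ on $\mathbb C^N\otimes\mathbb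 C^N$; $1+\varepsilon[N-\varepsilon]\neq0$ is assumed and $d=(1+\varepsilon[N-\varepsilon])^{-1}$. $\hat R(w)=I+wP_{(0)}$; $A_{12}=A\otimes I$, $A_{23}=I\otimes A$. *)

theory Defs
  imports Complex_Main
begin

definition qnum :: "real \<Rightarrow> real \<Rightarrow> real" where
  "qnum q x = (if q = 1 then x else (q powr x - q powr (-x)) / (q - 1 / q))"

definition rho :: "int \<Rightarrow> nat \<Rightarrow> nat \<Rightarrow> real" where
  "rho eps N i = (let n = N div 2 in
     if eps = 1 \<and> odd N then
       (if i \<le> n then real n + 1/2 - real i
        else if i = n + 1 then 0
        else real n + 3/2 - real i)
     else if eps = 1 then
       (if i \<le> n then real n - real i else real n + 1 - real i)
     else
       (if i \<le> n then real n + 1 - real i else real n - real i))"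

definition sgn_i :: "int \<Rightarrow> nat \<Rightarrow> nat \<Rightarrow> real" where
  "sgn_i eps N i = (if eps = -1 \<and> i > N div 2 then -1 else 1)"

definition dconst :: "int \<Rightarrow> nat \<Rightarrow> real \<Rightarrow> real" where
  "dconst eps N q = 1 / (1 + real_of_int eps * qnum q (real N - real_of_int eps))"

text \<open>Operators on C^N (x) C^N as matrices indexed by pairs in {1..N} x {1..N};
  entry ((a,b),(c,e)) is the coefficient of e_a (x) e_b in the image of e_c (x) e_e.
  P_(0) = d * sum_{i,j} q^(rho_i - rho_j) eps_i eps_j E_{i',j} (x) E_{i,j'}, with i' = N+1-i.\<close>
definition P0 :: "int \<Rightarrow> nat \<Rightarrow> real \<Rightarrow> nat \<times> nat \<Rightarrow> nat \<times> nat \<Rightarrow> complex" where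
  "P0 eps N q x y = (case x of (a, b) \<Rightarrow> case y of (c, e) \<Rightarrow>
     complex_of_real (dconst eps N q *
       (\<Sum>i\<in>{1..N}. \<Sum>j\<in>{1..N}.
          (if a = N + 1 - i \<and> b = i \<and> c = j \<and> e = N + 1 - j
           then q powr (rho eps N i - rho eps N j) * sgn_i eps N i * sgn_i eps N j
           else 0))))"

definition idm :: "'i \<Rightarrow> 'i \<Rightarrow> complex" where
  "idm x y = (if x = y then 1 else 0)"

definition Rhat :: "int \<Rightarrow> nat \<Rightarrow> real \<Rightarrow> complex \<Rightarrow> nat \<times> nat \<Rightarrow> nat \<times> nat \<Rightarrow> complex" where
  "Rhat eps N q w x y = idm x y + w * P0 eps N q x y"

definition mmul :: "'i set \<Rightarrow> ('i \<Rightarrow> 'i \<Rightarrow> complex) \<Rightarrow> ('i \<Rightarrow> 'i \<Rightarrow> complex) \<Rightarrow> 'i \<Rightarrow> 'i \<Rightarrow> complex" where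
  "mmul S A B x y = (\<Sum>z\<in>S. A x z * B z y)"

definition pairs :: "nat \<Rightarrow> (nat \<times> nat) set" where
  "pairs N = {1..N} \<times> {1..N}"

definition triples :: "nat \<Rightarrow> (nat \<times> nat \<times> nat) set" where
  "triples N = {1..N} \<times> {1..N} \<times> {1..N}"

definition op12 :: "(nat \<times> nat \<Rightarrow> nat \<times> nat \<Rightarrow> complex) \<Rightarrow> nat \<times> nat \<times> nat \<Rightarrow> nat \<times> nat \<times> nat \<Rightarrow> complex" where
  "op12 A x y = (case x of (a, b, c) \<Rightarrow> case y of (a', b', c') \<Rightarrow> A (a, b) (a', b') * idm c c')"

definition op23 :: "(nat \<times> nat \<Rightarrow> nat \<times> nat \<Rightarrow> complex) \<Rightarrow> nat \<times> nat \<times> nat \<Rightarrow> nat \<times> nat \<times> nat \<Rightarrow> complex" where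
  "op23 A x y = (case x of (a, b, c) \<Rightarrow> case y of (a', b', c') \<Rightarrow> idm a a' * A (b, c) (b', c'))"

end

theory Submission
  imports Defs
begin

(* Write P = P_(0) as d u v^T, where u = qcup = sum_i q^(rho_i) eps_i e_i' (x) e_i and
   v = qcap = sum_i q^(-rho_i) eps_i e_i (x) e_i'. Then v^T u = sum_i eps q^(-2 rho_i) = 1/d,
   so P is idempotent, and u, v satisfy the snake identities, which give the Temperley-Lieb
   relations P_12 P_23 P_12 = d^2 P_12 and P_23 P_12 P_23 = d^2 P_23. For idempotents A, B with
   ABA = cA and BAB = cB, both sides of the braid equation for I + wA, I + wB expand to
   I + w (A + B) + w^2 (AB + BA) as soon as 1 + w + c w^2 = 0; with c = d^2 the roots of this
   quadratic are w_+ and w_-. By Vieta w_+ + w_- + w_+ w_- = 0, which is exactly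
   (I + w_+ P)(I + w_- P) = I, and the last claim is linear interpolation in w. *)

lemma mmul_add_left:
  "mmul S (\<lambda>x y. X x y + Y x y) Z = (\<lambda>x y. mmul S X Z x y + mmul S Y Z x y)"
  by (simp add: mmul_def fun_eq_iff algebra_simps sum.distrib)

lemma mmul_add_right:
  "mmul S Z (\<lambda>x y. X x y + Y x y) = (\<lambda>x y. mmul S Z X x y + mmul S Z Y x y)"
  by (simp add: mmul_def fun_eq_iff algebra_simps sum.distrib)

lemma mmul_scale_left: "mmul S (\<lambda>x y. c * X x y) Z = (\<lambda>x y. c * mmul S X Z x y)"
  by (simp add: mmul_def fun_eq_iff algebra_simps sum_distrib_left)

lemma mmul_scale_right: "mmul S Z (\<lambda>x y. c * X x y) = (\<lambda>x y. c * mmul S Z X x y)"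
  by (simp add: mmul_def fun_eq_iff algebra_simps sum_distrib_left)

lemma idm_mult_left: "idm a b * z = (if a = b then z else 0)"
  by (simp add: idm_def)

lemma idm_mult_right: "z * idm a b = (if a = b then z else 0)"
  by (simp add: idm_def)

lemma if_zero_mult_left: "(if P then a else 0) * (b :: complex) = (if P then a * b else 0)"
  by simp

lemma if_zero_mult_right: "(b :: complex) * (if P then a else 0) = (if P then b * a else 0)"
  by simp

lemma sum_if_zero: "(\<Sum>x\<in>A. if P then f x else (0 :: 'a :: comm_monoid_add)) = (if P then sum f A else 0)"
  by simp

lemmas kronecker_simps = idm_mult_left idm_mult_right if_zero_mult_left if_zero_mult_right sum_if_zero

lemma mmul_idm_left: "finite S \<Longrightarrow> x \<in> S \<Longrightarrow> mmul S idm Z x y = Z x y"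
  by (simp add: mmul_def kronecker_simps)

lemma mmul_idm_right: "finite S \<Longrightarrow> y \<in> S \<Longrightarrow> mmul S Z idm x y = Z x y"
  by (simp add: mmul_def kronecker_simps)

lemma mmul_assoc: "mmul S (mmul S X Y) Z = mmul S X (mmul S Y Z)"
  unfolding mmul_def sum_distrib_left sum_distrib_right mult.assoc by (subst sum.swap) (rule refl)

definition rank_one :: "('i \<Rightarrow> complex) \<Rightarrow> ('i \<Rightarrow> complex) \<Rightarrow> 'i \<Rightarrow> 'i \<Rightarrow> complex" where
  "rank_one u v x y = u x * v y"

lemma mmul_rank_one_rank_one:
  "mmul S (rank_one u v) (rank_one u v) = (\<lambda>x y. (\<Sum>z\<in>S. v z * u z) * rank_one u v x y)"
  by (simp add: rank_one_def mmul_def fun_eq_iff sum_distrib_left sum_distrib_right mult_ac)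

lemma mmul_cong_left: "(\<And>z. z \<in> S \<Longrightarrow> M x z = M' x z) \<Longrightarrow> mmul S M Z x y = mmul S M' Z x y"
  by (simp add: mmul_def)

lemma mmul_idm_plus:
  assumes "finite S" "x \<in> S" "y \<in> S"
  shows "mmul S (\<lambda>x y. idm x y + X x y) (\<lambda>x y. idm x y + Y x y) x y
    = idm x y + X x y + Y x y + mmul S X Y x y"
  using assms by (simp add: mmul_add_left mmul_add_right mmul_idm_left mmul_idm_right)

lemma mmul_idm_plus_inverse:
  assumes "finite S" "x \<in> S" "y \<in> S"
    and "mmul S P P x y = P x y" and "a + b + a * b = 0"
  shows "mmul S (\<lambda>x y. idm x y + a * P x y) (\<lambda>x y. idm x y + b * P x y) x y = idm x y"
proof -
  have "mmul S (\<lambda>x y. idm x y + a * P x y) (\<lambda>x y. idm x y + b * P x y) x y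
      = idm x y + (a + b + a * b) * P x y"
    using assms(1-4) by (simp add: mmul_idm_plus mmul_scale_left mmul_scale_right algebra_simps)
  with assms(5) show ?thesis by simp
qed

lemma mmul_idm_plus_triple:
  assumes "finite S" "x \<in> S" "y \<in> S"
    and AA: "mmul S A A x y = A x y" and ABA: "mmul S A (mmul S B A) x y = c * A x y"
  shows "mmul S (mmul S (\<lambda>x y. idm x y + w * A x y) (\<lambda>x y. idm x y + w * B x y))
      (\<lambda>x y. idm x y + w * A x y) x y
    = idm x y + (2 * w + w\<^sup>2 + c * w ^ 3) * A x y + w * B x y
      + w\<^sup>2 * (mmul S A B x y + mmul S B A x y)"
proof -
  have "mmul S (mmul S (\<lambda>x y. idm x y + w * A x y) (\<lambda>x y. idm x y + w * B x y))
      (\<lambda>x y. idm x y + w * A x y) x y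
    = mmul S (\<lambda>x y. idm x y + (w * A x y + w * B x y + w\<^sup>2 * mmul S A B x y))
      (\<lambda>x y. idm x y + w * A x y) x y"
    using assms(1,2) by (intro mmul_cong_left)
      (simp add: mmul_idm_plus mmul_scale_left mmul_scale_right power2_eq_square algebra_simps)
  also have "\<dots> = idm x y + (w * A x y + w * B x y + w\<^sup>2 * mmul S A B x y) + w * A x y
      + mmul S (\<lambda>x y. w * A x y + w * B x y + w\<^sup>2 * mmul S A B x y) (\<lambda>x y. w * A x y) x y"
    by (rule mmul_idm_plus[OF assms(1-3)])
  also have "mmul S (\<lambda>x y. w * A x y + w * B x y + w\<^sup>2 * mmul S A B x y) (\<lambda>x y. w * A x y) x y
      = w\<^sup>2 * mmul S A A x y + w\<^sup>2 * mmul S B A x y + w ^ 3 * mmul S A (mmul S B A) x y"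
    by (simp add: mmul_add_left mmul_scale_left mmul_scale_right mmul_assoc
        power2_eq_square power3_eq_cube algebra_simps)
  finally show ?thesis by (simp add: AA ABA algebra_simps)
qed

lemma braid_idm_plus:
  assumes "finite S" "x \<in> S" "y \<in> S"
    and "\<And>x y. x \<in> S \<Longrightarrow> y \<in> S \<Longrightarrow> mmul S A A x y = A x y"
    and "\<And>x y. x \<in> S \<Longrightarrow> y \<in> S \<Longrightarrow> mmul S B B x y = B x y"
    and "\<And>x y. x \<in> S \<Longrightarrow> y \<in> S \<Longrightarrow> mmul S A (mmul S B A) x y = c * A x y"
    and "\<And>x y. x \<in> S \<Longrightarrow> y \<in> S \<Longrightarrow> mmul S B (mmul S A B) x y = c * B x y"
    and w: "1 + w + c * w\<^sup>2 = 0"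
  shows "mmul S (mmul S (\<lambda>x y. idm x y + w * A x y) (\<lambda>x y. idm x y + w * B x y))
      (\<lambda>x y. idm x y + w * A x y) x y
    = mmul S (mmul S (\<lambda>x y. idm x y + w * B x y) (\<lambda>x y. idm x y + w * A x y))
      (\<lambda>x y. idm x y + w * B x y) x y"
proof -
  have w': "2 * w + w\<^sup>2 + c * w ^ 3 = w"
    using arg_cong[OF w, of "\<lambda>t. w * t"] by (simp add: algebra_simps power2_eq_square power3_eq_cube)
  show ?thesis
    unfolding mmul_idm_plus_triple[OF assms(1-3) assms(4,6)[OF assms(2,3)]]
      mmul_idm_plus_triple[OF assms(1-3) assms(5,7)[OF assms(2,3)]] w'
    by (simp add: algebra_simps)
qed

section \<open>Operators on three tensor factors and the snake identities\<close>

lemma sum_triples: "sum h (triples N) = (\<Sum>a\<in>{1..N}. \<Sum>b\<in>{1..N}. \<Sum>c\<in>{1..N}. h (a, b, c))"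
  unfolding triples_def by (simp add: sum.cartesian_product')

lemma sum_pairs: "sum h (pairs N) = (\<Sum>a\<in>{1..N}. \<Sum>b\<in>{1..N}. h (a, b))"
  unfolding pairs_def by (simp add: sum.cartesian_product')

lemma finite_pairs: "finite (pairs N)"
  by (simp add: pairs_def)

lemma finite_triples: "finite (triples N)"
  by (simp add: triples_def)

lemma op12_scale: "op12 (\<lambda>x y. c * A x y) = (\<lambda>x y. c * op12 A x y)"
  by (simp add: op12_def fun_eq_iff split: prod.splits)

lemma op23_scale: "op23 (\<lambda>x y. c * A x y) = (\<lambda>x y. c * op23 A x y)"
  by (simp add: op23_def fun_eq_iff split: prod.splits)

lemma op12_idm_plus: "op12 (\<lambda>x y. idm x y + A x y) = (\<lambda>x y. idm x y + op12 A x y)"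
  by (auto simp: op12_def idm_def fun_eq_iff split: prod.splits)

lemma op23_idm_plus: "op23 (\<lambda>x y. idm x y + A x y) = (\<lambda>x y. idm x y + op23 A x y)"
  by (auto simp: op23_def idm_def fun_eq_iff split: prod.splits)

lemma mmul_op12_op12:
  assumes "x \<in> triples N"
  shows "mmul (triples N) (op12 X) (op12 Y) x y = op12 (mmul (pairs N) X Y) x y"
proof -
  obtain a b c a' b' c' where "x = (a, b, c)" "y = (a', b', c')" by (metis prod.exhaust)
  moreover have "c \<in> {1..N}" using assms calculation by (simp add: triples_def)
  ultimately show ?thesis
    by (simp add: mmul_def sum_triples sum_pairs op12_def sum_distrib_right kronecker_simps)
qed

lemma mmul_op23_op23:
  assumes "x \<in> triples N"
  shows "mmul (triples N) (op23 X) (op23 Y) x y = op23 (mmul (pairs N) X Y) x y"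
proof -
  obtain a b c a' b' c' where "x = (a, b, c)" "y = (a', b', c')" by (metis prod.exhaust)
  moreover have "a \<in> {1..N}" using assms calculation by (simp add: triples_def)
  ultimately show ?thesis
    by (simp add: mmul_def sum_triples sum_pairs op23_def sum_distrib_left kronecker_simps)
qed

(* cup and cap are a vector and a covector on C^N (x) C^N; the assumptions are the two
   zig-zag identities (cap (x) 1)(1 (x) cup) = 1 and (1 (x) cap)(cup (x) 1) = 1. *)
locale snake =
  fixes N :: nat and cup cap :: "nat \<times> nat \<Rightarrow> complex"
  assumes cap_cup: "a \<in> {1..N} \<Longrightarrow> c \<in> {1..N} \<Longrightarrow> (\<Sum>v\<in>{1..N}. cap (a, v) * cup (v, c)) = idm a c"
    and cup_cap: "a \<in> {1..N} \<Longrightarrow> c \<in> {1..N} \<Longrightarrow> (\<Sum>v\<in>{1..N}. cup (a, v) * cap (v, c)) = idm a c"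
begin

lemma mmul_op23_op12:
  assumes "(u1, u2, u3) \<in> triples N" "(a, b, c) \<in> triples N"
  shows "mmul (triples N) (op23 (rank_one cup cap)) (op12 (rank_one cup cap)) (u1, u2, u3) (a, b, c)
    = cup (u2, u3) * cap (a, b) * idm u1 c"
proof -
  from assms have u1: "u1 \<in> {1..N}" and c: "c \<in> {1..N}" by (auto simp: triples_def)
  have "mmul (triples N) (op23 (rank_one cup cap)) (op12 (rank_one cup cap)) (u1, u2, u3) (a, b, c)
    = cup (u2, u3) * cap (a, b) * (\<Sum>v\<in>{1..N}. cup (u1, v) * cap (v, c))"
    using u1 c by (simp add: mmul_def sum_triples op12_def op23_def rank_one_def sum_distrib_left
        mult_ac kronecker_simps)
  also have "\<dots> = cup (u2, u3) * cap (a, b) * idm u1 c"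
    by (simp only: cup_cap[OF u1 c])
  finally show ?thesis .
qed

lemma mmul_op12_op23:
  assumes "(u1, u2, u3) \<in> triples N" "(a, b, c) \<in> triples N"
  shows "mmul (triples N) (op12 (rank_one cup cap)) (op23 (rank_one cup cap)) (u1, u2, u3) (a, b, c)
    = cup (u1, u2) * cap (b, c) * idm u3 a"
proof -
  from assms have u3: "u3 \<in> {1..N}" and a: "a \<in> {1..N}" by (auto simp: triples_def)
  have "mmul (triples N) (op12 (rank_one cup cap)) (op23 (rank_one cup cap)) (u1, u2, u3) (a, b, c)
    = cup (u1, u2) * cap (b, c) * (\<Sum>v\<in>{1..N}. cap (a, v) * cup (v, u3))"
    using u3 a by (simp add: mmul_def sum_triples op12_def op23_def rank_one_def sum_distrib_left
        mult_ac kronecker_simps)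
  also have "\<dots> = cup (u1, u2) * cap (b, c) * idm u3 a"
    by (simp only: cap_cup[OF a u3]) (simp add: idm_def)
  finally show ?thesis .
qed

lemma temperley_lieb_op12:
  assumes "x \<in> triples N" and "y \<in> triples N"
  shows "mmul (triples N) (op12 (rank_one cup cap))
      (mmul (triples N) (op23 (rank_one cup cap)) (op12 (rank_one cup cap))) x y
    = op12 (rank_one cup cap) x y"
proof -
  obtain a b c a' b' c' where xy: "x = (a, b, c)" "y = (a', b', c')" by (metis prod.exhaust)
  with assms have x: "(a, b, c) \<in> triples N" and y: "(a', b', c') \<in> triples N" by simp_all
  from x y have c: "c \<in> {1..N}" and c': "c' \<in> {1..N}" by (auto simp: triples_def)
  have "mmul (triples N) (op12 (rank_one cup cap))
      (mmul (triples N) (op23 (rank_one cup cap)) (op12 (rank_one cup cap))) x y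
    = (\<Sum>u1\<in>{1..N}. \<Sum>u2\<in>{1..N}. \<Sum>u3\<in>{1..N}. op12 (rank_one cup cap) (a, b, c) (u1, u2, u3)
        * (cup (u2, u3) * cap (a', b') * idm u1 c'))"
    unfolding xy mmul_def[of _ "op12 _"] sum_triples
    by (intro sum.cong refl) (subst mmul_op23_op12, use y in \<open>auto simp: triples_def\<close>)
  also have "\<dots> = cup (a, b) * cap (a', b') * (\<Sum>v\<in>{1..N}. cap (c', v) * cup (v, c))"
    using c c' by (simp add: op12_def rank_one_def sum_distrib_left mult_ac kronecker_simps)
  also have "\<dots> = op12 (rank_one cup cap) x y"
    by (simp only: cap_cup[OF c' c]) (simp add: xy op12_def rank_one_def idm_def)
  finally show ?thesis .
qed

lemma temperley_lieb_op23:
  assumes "x \<in> triples N" and "y \<in> triples N"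
  shows "mmul (triples N) (op23 (rank_one cup cap))
      (mmul (triples N) (op12 (rank_one cup cap)) (op23 (rank_one cup cap))) x y
    = op23 (rank_one cup cap) x y"
proof -
  obtain a b c a' b' c' where xy: "x = (a, b, c)" "y = (a', b', c')" by (metis prod.exhaust)
  with assms have x: "(a, b, c) \<in> triples N" and y: "(a', b', c') \<in> triples N" by simp_all
  from x y have a: "a \<in> {1..N}" and a': "a' \<in> {1..N}" by (auto simp: triples_def)
  have "mmul (triples N) (op23 (rank_one cup cap))
      (mmul (triples N) (op12 (rank_one cup cap)) (op23 (rank_one cup cap))) x y
    = (\<Sum>u1\<in>{1..N}. \<Sum>u2\<in>{1..N}. \<Sum>u3\<in>{1..N}. op23 (rank_one cup cap) (a, b, c) (u1, u2, u3)
        * (cup (u1, u2) * cap (b', c') * idm u3 a'))"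
    unfolding xy mmul_def[of _ "op23 _"] sum_triples
    by (intro sum.cong refl) (subst mmul_op12_op23, use y in \<open>auto simp: triples_def\<close>)
  also have "\<dots> = cup (b, c) * cap (b', c') * (\<Sum>v\<in>{1..N}. cup (a, v) * cap (v, a'))"
    using a a' by (simp add: op23_def rank_one_def sum_distrib_left mult_ac kronecker_simps)
  also have "\<dots> = op23 (rank_one cup cap) x y"
    by (simp only: cup_cap[OF a a']) (simp add: xy op23_def rank_one_def idm_def)
  finally show ?thesis .
qed

end

section \<open>The cup and cap of P_(0)\<close>

definition qcup :: "int \<Rightarrow> nat \<Rightarrow> real \<Rightarrow> nat \<times> nat \<Rightarrow> complex" where
  "qcup eps N q = (\<lambda>(a, b). if b \<in> {1..N} \<and> a = N + 1 - b
     then complex_of_real (q powr rho eps N b * sgn_i eps N b) else 0)"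

definition qcap :: "int \<Rightarrow> nat \<Rightarrow> real \<Rightarrow> nat \<times> nat \<Rightarrow> complex" where
  "qcap eps N q = (\<lambda>(a, b). if a \<in> {1..N} \<and> b = N + 1 - a
     then complex_of_real (q powr (- rho eps N a) * sgn_i eps N a) else 0)"

lemma P0_eq_rank_one:
  "P0 eps N q = (\<lambda>x y. complex_of_real (dconst eps N q) * rank_one (qcup eps N q) (qcap eps N q) x y)"
proof (intro ext)
  fix x y :: "nat \<times> nat"
  obtain a b c e where xy: "x = (a, b)" "y = (c, e)" by (metis prod.exhaust)
  let ?t = "\<lambda>i j. q powr (rho eps N i - rho eps N j) * sgn_i eps N i * sgn_i eps N j"
  have double_sum: "(\<Sum>i\<in>{1..N}. \<Sum>j\<in>{1..N}.
        if a = N + 1 - i \<and> b = i \<and> c = j \<and> e = N + 1 - j then ?t i j else 0)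
      = (if b \<in> {1..N} \<and> a = N + 1 - b then q powr rho eps N b * sgn_i eps N b else 0)
      * (if c \<in> {1..N} \<and> e = N + 1 - c then q powr (- rho eps N c) * sgn_i eps N c else 0)"
    (is "?S = _")
  proof -
    have "?S = (\<Sum>i\<in>{1..N}. \<Sum>j\<in>{1..N}. if i = b then if j = c then
         (if a = N + 1 - b \<and> e = N + 1 - c then ?t b c else 0) else 0 else 0)"
      by (intro sum.cong refl) auto
    then show ?thesis by (simp add: kronecker_simps powr_diff powr_minus divide_inverse)
  qed
  show "P0 eps N q x y
    = complex_of_real (dconst eps N q) * rank_one (qcup eps N q) (qcap eps N q) x y"
    unfolding xy P0_def rank_one_def qcup_def qcap_def prod.case double_sum by simp
qed

lemma qweight_mult_inverse:
  assumes "q > 0"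
  shows "complex_of_real (q powr (- rho eps N i) * sgn_i eps N i)
    * complex_of_real (q powr rho eps N i * sgn_i eps N i) = 1"
  using assms by (simp add: sgn_i_def powr_minus flip: of_real_mult)

lemma snake_qcup_qcap:
  assumes "q > 0"
  shows "snake N (qcup eps N q) (qcap eps N q)"
proof
  fix a c assume a: "a \<in> {1..N}" and c: "c \<in> {1..N}"
  then have a': "N + 1 - a \<in> {1..N}" by auto
  have "(\<Sum>v\<in>{1..N}. qcap eps N q (a, v) * qcup eps N q (v, c))
    = (\<Sum>v\<in>{1..N}. if v = N + 1 - a then idm a c else 0)"
    using a c qweight_mult_inverse[OF assms]
    by (intro sum.cong refl) (auto simp: qcap_def qcup_def idm_def)
  then show "(\<Sum>v\<in>{1..N}. qcap eps N q (a, v) * qcup eps N q (v, c)) = idm a c"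
    using a' by (simp only: sum.delta finite_atLeastAtMost if_True)
  have "(\<Sum>v\<in>{1..N}. qcup eps N q (a, v) * qcap eps N q (v, c))
    = (\<Sum>v\<in>{1..N}. if v = N + 1 - a then idm a c else 0)"
    using a c qweight_mult_inverse[OF assms]
    by (intro sum.cong refl) (auto simp: qcap_def qcup_def idm_def mult.commute)
  then show "(\<Sum>v\<in>{1..N}. qcup eps N q (a, v) * qcap eps N q (v, c)) = idm a c"
    using a' by (simp only: sum.delta finite_atLeastAtMost if_True)
qed

lemma qnum_of_nat:
  assumes q: "q > 0"
  shows "qnum q (real m) = (\<Sum>j<m. q powr (real m - 1 - 2 * real j))"
proof (cases "q = 1")
  case True
  then show ?thesis by (simp add: qnum_def)
next
  case False
  have nz: "q - 1 / q \<noteq> 0"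
  proof
    assume "q - 1 / q = 0"
    then have "q\<^sup>2 = 1" using q by (simp add: field_simps power2_eq_square)
    with q False show False by (simp add: power2_eq_1_iff)
  qed
  have step: "(q - 1 / q) * q powr (real m - 1 - 2 * real j)
    = q powr (real m - 2 * real j) - q powr (real m - 2 * real (Suc j))" for j
  proof -
    have up: "q * q powr (real m - 1 - 2 * real j) = q powr (real m - 2 * real j)"
      using q by (simp add: powr_mult_base)
    have "q powr (real m - 2 * real (Suc j)) = q powr ((real m - 1 - 2 * real j) - 1)"
      by (simp add: algebra_simps)
    then have down: "q powr (real m - 1 - 2 * real j) / q = q powr (real m - 2 * real (Suc j))"
      unfolding powr_diff using q by simp
    from up down show ?thesis by (simp add: algebra_simps diff_divide_distrib)
  qed
  have "(q - 1 / q) * (\<Sum>j<m. q powr (real m - 1 - 2 * real j)) = q powr real m - q powr (- real m)"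
    unfolding sum_distrib_left step
      sum_lessThan_telescope'[where f = "\<lambda>j. q powr (real m - 2 * real j)"] by simp
  with nz False show ?thesis by (simp add: qnum_def field_simps)
qed

(* The exponents -2 rho_i are those of the q-number [N - eps], with the exponent 0 added for
   eps = 1 and removed for eps = -1. *)
lemma sum_powr_rho_orthogonal_odd:
  assumes N: "N = 2 * n + 1" and q: "q > 0"
  shows "(\<Sum>i\<in>{1..N}. q powr (- 2 * rho 1 N i)) = 1 + qnum q (real (2 * n))"
proof -
  have rho: "rho 1 N i = (if i \<le> n then real n + 1/2 - real i
      else if i = n + 1 then 0 else real n + 3/2 - real i)" for i
    using N by (simp add: rho_def)
  have "(\<Sum>i\<in>{1..N}. q powr (- 2 * rho 1 N i))
      = q powr (- 2 * rho 1 N (n + 1)) + (\<Sum>i\<in>{1..N} - {n + 1}. q powr (- 2 * rho 1 N i))"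
    by (rule sum.remove) (auto simp: N)
  also have "(\<Sum>i\<in>{1..N} - {n + 1}. q powr (- 2 * rho 1 N i))
      = (\<Sum>j<2 * n. q powr (real (2 * n) - 1 - 2 * real j))"
  proof (rule sum.reindex_bij_witness[where j = "\<lambda>i. if i \<le> n then 2 * n - i else 2 * n + 1 - i"
        and i = "\<lambda>j. if j \<ge> n then 2 * n - j else 2 * n + 1 - j"])
    fix i assume "i \<in> {1..N} - {n + 1}"
    then have "1 \<le> i" "i \<le> 2 * n + 1" "i \<noteq> n + 1" using N by auto
    then show "q powr (real (2 * n) - 1 - 2 * real (if i \<le> n then 2 * n - i else 2 * n + 1 - i))
        = q powr (- 2 * rho 1 N i)"
      by (auto simp: rho of_nat_diff algebra_simps)
  qed (auto simp: N)
  finally show ?thesis unfolding qnum_of_nat[OF q] using q by (simp add: rho)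
qed

lemma sum_powr_rho_orthogonal_even:
  assumes N: "N = 2 * n" and n: "n > 0" and q: "q > 0"
  shows "(\<Sum>i\<in>{1..N}. q powr (- 2 * rho 1 N i)) = 1 + qnum q (real (2 * n - 1))"
proof -
  have rho: "rho 1 N i = (if i \<le> n then real n - real i else real n + 1 - real i)" for i
    using N by (simp add: rho_def)
  have "(\<Sum>i\<in>{1..N}. q powr (- 2 * rho 1 N i))
      = q powr (- 2 * rho 1 N n) + (\<Sum>i\<in>{1..N} - {n}. q powr (- 2 * rho 1 N i))"
    by (rule sum.remove) (use n in \<open>auto simp: N\<close>)
  also have "(\<Sum>i\<in>{1..N} - {n}. q powr (- 2 * rho 1 N i))
      = (\<Sum>j<2 * n - 1. q powr (real (2 * n - 1) - 1 - 2 * real j))"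
  proof (rule sum.reindex_bij_witness[where j = "\<lambda>i. if i < n then 2 * n - 1 - i else 2 * n - i"
        and i = "\<lambda>j. if j \<ge> n then 2 * n - 1 - j else 2 * n - j"])
    fix i assume "i \<in> {1..N} - {n}"
    then have "1 \<le> i" "i \<le> 2 * n" "i \<noteq> n" using N by auto
    then show "q powr (real (2 * n - 1) - 1 - 2 * real (if i < n then 2 * n - 1 - i else 2 * n - i))
        = q powr (- 2 * rho 1 N i)"
      using n by (auto simp: rho of_nat_diff algebra_simps)
  qed (use n in \<open>auto simp: N\<close>)
  finally show ?thesis unfolding qnum_of_nat[OF q] using q by (simp add: rho)
qed

lemma sum_powr_rho_symplectic:
  assumes N: "N = 2 * n" and q: "q > 0"
  shows "(\<Sum>i\<in>{1..N}. q powr (- 2 * rho (- 1) N i)) = qnum q (real (2 * n + 1)) - 1"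
proof -
  have rho: "rho (- 1) N i = (if i \<le> n then real n + 1 - real i else real n - real i)" for i
    using N by (simp add: rho_def)
  have "qnum q (real (2 * n + 1)) = (\<Sum>j<2 * n + 1. q powr (real (2 * n + 1) - 1 - 2 * real j))"
    using q by (rule qnum_of_nat)
  also have "\<dots> = q powr (real (2 * n + 1) - 1 - 2 * real n)
      + (\<Sum>j\<in>{..<2 * n + 1} - {n}. q powr (real (2 * n + 1) - 1 - 2 * real j))"
    by (rule sum.remove) auto
  also have "(\<Sum>j\<in>{..<2 * n + 1} - {n}. q powr (real (2 * n + 1) - 1 - 2 * real j))
      = (\<Sum>i\<in>{1..N}. q powr (- 2 * rho (- 1) N i))"
  proof (rule sum.reindex_bij_witness[where i = "\<lambda>i. if i \<le> n then 2 * n + 1 - i else 2 * n - i"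
        and j = "\<lambda>j. if j > n then 2 * n + 1 - j else 2 * n - j"])
    fix j assume "j \<in> {..<2 * n + 1} - {n}"
    then show "q powr (- 2 * rho (- 1) N (if j > n then 2 * n + 1 - j else 2 * n - j))
        = q powr (real (2 * n + 1) - 1 - 2 * real j)"
      by (auto simp: rho of_nat_diff algebra_simps)
  qed (auto simp: N)
  finally show ?thesis using q by simp
qed

lemma rho_reflect:
  assumes "eps = 1 \<or> eps = - 1" and "eps = - 1 \<longrightarrow> even N" and "i \<in> {1..N}"
  shows "rho eps N (N + 1 - i) = - rho eps N i"
proof -
  obtain n where "N = 2 * n \<or> N = 2 * n + 1" by (metis oddE evenE)
  with assms show ?thesis by (auto simp: rho_def Let_def of_nat_diff algebra_simps)
qed

lemma sgn_i_reflect: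
  assumes "eps = 1 \<or> eps = - 1" and "eps = - 1 \<longrightarrow> even N" and "i \<in> {1..N}"
  shows "sgn_i eps N i * sgn_i eps N (N + 1 - i) = real_of_int eps"
  using assms by (auto simp: sgn_i_def elim!: evenE)

lemma sum_powr_rho:
  assumes heps: "eps = 1 \<or> eps = - 1" and heven: "eps = - 1 \<longrightarrow> even N"
    and "N > 0" and q: "q > 0"
  shows "real_of_int eps * (\<Sum>i\<in>{1..N}. q powr (- 2 * rho eps N i))
    = 1 + real_of_int eps * qnum q (real N - real_of_int eps)"
proof (cases "eps = 1")
  case True
  show ?thesis
  proof (cases "even N")
    case True
    then obtain n where N: "N = 2 * n" by (auto elim: evenE)
    with \<open>N > 0\<close> have "n > 0" by simp
    then have "real N - 1 = real (2 * n - 1)" using N by simp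
    then show ?thesis using \<open>eps = 1\<close> sum_powr_rho_orthogonal_even[OF N \<open>n > 0\<close> q] by simp
  next
    case False
    then obtain n where N: "N = 2 * n + 1" by (auto elim: oddE)
    then have "real N - 1 = real (2 * n)" by simp
    then show ?thesis using \<open>eps = 1\<close> sum_powr_rho_orthogonal_odd[OF N q] by simp
  qed
next
  case False
  with heps heven obtain n where "eps = - 1" and N: "N = 2 * n" by (auto elim: evenE)
  then have "real N + 1 = real (2 * n + 1)" by simp
  then show ?thesis using \<open>eps = - 1\<close> sum_powr_rho_symplectic[OF N q] by (simp add: add.commute)
qed

lemma qcap_qcup_pairing:
  assumes heps: "eps = 1 \<or> eps = - 1" and heven: "eps = - 1 \<longrightarrow> even N"
    and "N > 0" and q: "q > 0"
  shows "(\<Sum>z\<in>pairs N. qcap eps N q z * qcup eps N q z)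
    = complex_of_real (1 + real_of_int eps * qnum q (real N - real_of_int eps))"
proof -
  have "qcap eps N q (i, N + 1 - i) * qcup eps N q (i, N + 1 - i)
      = complex_of_real (real_of_int eps * q powr (- 2 * rho eps N i))" if i: "i \<in> {1..N}" for i
  proof -
    have "q powr (- rho eps N i) * q powr rho eps N (N + 1 - i) = q powr (- 2 * rho eps N i)"
      using rho_reflect[OF heps heven i] by (simp flip: powr_add)
    with i sgn_i_reflect[OF heps heven i] show ?thesis
      by (simp add: qcap_def qcup_def flip: of_real_mult) (auto simp: algebra_simps)
  qed
  note diagonal = this
  have "(\<Sum>z\<in>pairs N. qcap eps N q z * qcup eps N q z)
      = (\<Sum>i\<in>{1..N}. \<Sum>j\<in>{1..N}. if j = N + 1 - i
          then qcap eps N q (i, N + 1 - i) * qcup eps N q (i, N + 1 - i) else 0)"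
    unfolding sum_pairs by (intro sum.cong refl) (auto simp: qcap_def)
  also have "\<dots> = (\<Sum>i\<in>{1..N}. qcap eps N q (i, N + 1 - i) * qcup eps N q (i, N + 1 - i))"
    by (intro sum.cong refl) auto
  also have "\<dots> = (\<Sum>i\<in>{1..N}. complex_of_real (real_of_int eps * q powr (- 2 * rho eps N i)))"
    by (intro sum.cong refl) (rule diagonal)
  also have "\<dots> = complex_of_real (real_of_int eps * (\<Sum>i\<in>{1..N}. q powr (- 2 * rho eps N i)))"
    by (simp add: sum_distrib_left)
  finally show ?thesis by (simp only: sum_powr_rho[OF assms])
qed

section \<open>The braid relation and inverse of R(w)\<close>

lemma P0_idempotent:
  assumes heps: "eps = 1 \<or> eps = - 1" and heven: "eps = - 1 \<longrightarrow> even N"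
    and "N > 0" and "q > 0" and hnz: "1 + real_of_int eps * qnum q (real N - real_of_int eps) \<noteq> 0"
  shows "mmul (pairs N) (P0 eps N q) (P0 eps N q) = P0 eps N q"
proof -
  have "dconst eps N q * (1 + real_of_int eps * qnum q (real N - real_of_int eps)) = 1"
    using hnz by (simp add: dconst_def)
  then have trace: "complex_of_real (dconst eps N q) * (\<Sum>z\<in>pairs N. qcap eps N q z * qcup eps N q z) = 1"
    by (simp only: qcap_qcup_pairing[OF assms(1-4)] of_real_mult[symmetric] of_real_1)
  show ?thesis
    unfolding P0_eq_rank_one mmul_scale_left mmul_scale_right mmul_rank_one_rank_one
    by (simp only: mult.assoc[symmetric] trace mult_1_left)
qed

lemma P0_temperley_lieb:
  assumes "q > 0" and "x \<in> triples N" and "y \<in> triples N"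
  shows "mmul (triples N) (op12 (P0 eps N q)) (mmul (triples N) (op23 (P0 eps N q)) (op12 (P0 eps N q))) x y
      = (complex_of_real (dconst eps N q))\<^sup>2 * op12 (P0 eps N q) x y"
    and "mmul (triples N) (op23 (P0 eps N q)) (mmul (triples N) (op12 (P0 eps N q)) (op23 (P0 eps N q))) x y
      = (complex_of_real (dconst eps N q))\<^sup>2 * op23 (P0 eps N q) x y"
proof -
  interpret snake N "qcup eps N q" "qcap eps N q"
    using assms(1) by (rule snake_qcup_qcap)
  show "mmul (triples N) (op12 (P0 eps N q)) (mmul (triples N) (op23 (P0 eps N q)) (op12 (P0 eps N q))) x y
      = (complex_of_real (dconst eps N q))\<^sup>2 * op12 (P0 eps N q) x y"
    unfolding P0_eq_rank_one op12_scale op23_scale mmul_scale_left mmul_scale_right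
    by (simp add: temperley_lieb_op12[OF assms(2,3)] power2_eq_square)
  show "mmul (triples N) (op23 (P0 eps N q)) (mmul (triples N) (op12 (P0 eps N q)) (op23 (P0 eps N q))) x y
      = (complex_of_real (dconst eps N q))\<^sup>2 * op23 (P0 eps N q) x y"
    unfolding P0_eq_rank_one op12_scale op23_scale mmul_scale_left mmul_scale_right
    by (simp add: temperley_lieb_op23[OF assms(2,3)] power2_eq_square)
qed

lemma Rhat_eq_idm_plus: "Rhat eps N q w = (\<lambda>x y. idm x y + w * P0 eps N q x y)"
  by (simp add: fun_eq_iff Rhat_def)

lemma Rhat_braid:
  assumes heps: "eps = 1 \<or> eps = - 1" and heven: "eps = - 1 \<longrightarrow> even N"
    and "N > 0" and "q > 0" and hnz: "1 + real_of_int eps * qnum q (real N - real_of_int eps) \<noteq> 0"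
    and w: "1 + w + (complex_of_real (dconst eps N q))\<^sup>2 * w\<^sup>2 = 0"
    and x: "x \<in> triples N" and y: "y \<in> triples N"
  shows "mmul (triples N) (mmul (triples N) (op12 (Rhat eps N q w)) (op23 (Rhat eps N q w)))
      (op12 (Rhat eps N q w)) x y
    = mmul (triples N) (mmul (triples N) (op23 (Rhat eps N q w)) (op12 (Rhat eps N q w)))
      (op23 (Rhat eps N q w)) x y"
  unfolding Rhat_eq_idm_plus op12_idm_plus op23_idm_plus op12_scale op23_scale
  by (rule braid_idm_plus[OF finite_triples x y _ _ _ _ w])
    (simp_all add: mmul_op12_op12 mmul_op23_op23 P0_idempotent[OF assms(1-5)] P0_temperley_lieb[OF \<open>q > 0\<close>])

lemma Rhat_mult_inverse:
  assumes heps: "eps = 1 \<or> eps = - 1" and heven: "eps = - 1 \<longrightarrow> even N"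
    and "N > 0" and "q > 0" and hnz: "1 + real_of_int eps * qnum q (real N - real_of_int eps) \<noteq> 0"
    and ab: "a + b + a * b = 0"
    and x: "x \<in> pairs N" and y: "y \<in> pairs N"
  shows "mmul (pairs N) (Rhat eps N q a) (Rhat eps N q b) x y = idm x y"
  unfolding Rhat_eq_idm_plus
  by (rule mmul_idm_plus_inverse[OF finite_pairs x y _ ab]) (simp add: P0_idempotent[OF assms(1-5)])

lemma Rhat_interpolation:
  assumes "a \<noteq> b"
  shows "Rhat eps N q w x y = ((w - b) * Rhat eps N q a x y - (w - a) * Rhat eps N q b x y) / (a - b)"
  using assms by (simp add: Rhat_def field_simps)

lemma hecke_quadratic_roots:
  fixes d :: real
  assumes "d \<noteq> 0" and "4 * d\<^sup>2 < 1"
  defines "wp \<equiv> complex_of_real ((- 1 + sqrt (1 - 4 * d\<^sup>2)) / (2 * d\<^sup>2))"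
    and "wm \<equiv> complex_of_real ((- 1 - sqrt (1 - 4 * d\<^sup>2)) / (2 * d\<^sup>2))"
  shows "1 + wp + (complex_of_real d)\<^sup>2 * wp\<^sup>2 = 0" and "1 + wm + (complex_of_real d)\<^sup>2 * wm\<^sup>2 = 0"
    and "wp + wm + wp * wm = 0" and "wp \<noteq> wm"
proof -
  define s where "s = sqrt (1 - 4 * d\<^sup>2)"
  have s: "s\<^sup>2 = 1 - 4 * d\<^sup>2" "s > 0" using assms(2) by (simp_all add: s_def)
  have d2: "2 * d\<^sup>2 \<noteq> 0" using \<open>d \<noteq> 0\<close> by simp
  define rp rm where "rp = (- 1 + s) / (2 * d\<^sup>2)" and "rm = (- 1 - s) / (2 * d\<^sup>2)"
  have wp: "wp = complex_of_real rp" and wm: "wm = complex_of_real rm"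
    by (simp_all add: wp_def wm_def rp_def rm_def s_def)
  have "1 + rp + d\<^sup>2 * rp\<^sup>2 = 0" and "1 + rm + d\<^sup>2 * rm\<^sup>2 = 0" and "rp + rm + rp * rm = 0"
    unfolding rp_def rm_def using d2 s(1) by (simp_all add: field_simps power2_eq_square; algebra)+
  then have "complex_of_real (1 + rp + d\<^sup>2 * rp\<^sup>2) = 0" and "complex_of_real (1 + rm + d\<^sup>2 * rm\<^sup>2) = 0"
    and "complex_of_real (rp + rm + rp * rm) = 0"
    by simp_all
  then show "1 + wp + (complex_of_real d)\<^sup>2 * wp\<^sup>2 = 0" and "1 + wm + (complex_of_real d)\<^sup>2 * wm\<^sup>2 = 0"
    and "wp + wm + wp * wm = 0"
    by (simp_all add: wp wm)
  show "wp \<noteq> wm"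
    using s(2) d2 by (simp add: wp wm rp_def rm_def divide_cancel_right)
qed

theorem mainTheorem6:
  fixes eps :: int and N :: nat and q :: real
  defines "d \<equiv> dconst eps N q"
  defines "wp \<equiv> complex_of_real ((-1 + sqrt (1 - 4 * d\<^sup>2)) / (2 * d\<^sup>2))"
  defines "wm \<equiv> complex_of_real ((-1 - sqrt (1 - 4 * d\<^sup>2)) / (2 * d\<^sup>2))"
  assumes heps: "eps = 1 \<or> eps = -1"
    and hN: "N \<ge> 2"
    and heven: "eps = -1 \<longrightarrow> even N"
    and hq: "q > 0"
    and hnz: "1 + real_of_int eps * qnum q (real N - real_of_int eps) \<noteq> 0"
    and hd: "4 * d\<^sup>2 < 1"
  shows "(\<forall>w\<in>{wp, wm}. \<forall>x\<in>triples N. \<forall>y\<in>triples N.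
            mmul (triples N) (mmul (triples N) (op12 (Rhat eps N q w)) (op23 (Rhat eps N q w)))
                 (op12 (Rhat eps N q w)) x y
          = mmul (triples N) (mmul (triples N) (op23 (Rhat eps N q w)) (op12 (Rhat eps N q w)))
                 (op23 (Rhat eps N q w)) x y)
       \<and> (\<forall>x\<in>pairs N. \<forall>y\<in>pairs N.
            mmul (pairs N) (Rhat eps N q wp) (Rhat eps N q wm) x y = idm x y)
       \<and> (\<forall>w::complex. \<forall>x\<in>pairs N. \<forall>y\<in>pairs N.
            Rhat eps N q w x y
          = ((w - wm) * Rhat eps N q wp x y - (w - wp) * Rhat eps N q wm x y) / (wp - wm))"
proof -
  have "N > 0" using hN by simp
  have "d \<noteq> 0" using hnz by (simp add: d_def dconst_def)
  note roots = hecke_quadratic_roots[OF \<open>d \<noteq> 0\<close> hd, folded wp_def wm_def]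
  have hecke: "1 + w + (complex_of_real (dconst eps N q))\<^sup>2 * w\<^sup>2 = 0" if "w \<in> {wp, wm}" for w
    using that roots(1,2) by (auto simp: d_def)
  show ?thesis
    by (intro conjI ballI allI Rhat_braid[OF heps heven \<open>N > 0\<close> hq hnz hecke]
        Rhat_mult_inverse[OF heps heven \<open>N > 0\<close> hq hnz roots(3)] Rhat_interpolation[OF roots(4)])
qed

end
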